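(* Suppose $s>1/2$ and $g\in H^s(\mathbb U)$. Then there exists a constant $C_s>0$ such that for all $N,M\ge1$, $$\|\mathcal I_N\mathcal M(g)\mathcal C^+-\mathcal I_N\mathcal M(\mathcal P_Mg)\mathcal C^+\|_s\le C_s\|g-\mathcal P_Mg\|_s,\qquad\|\mathcal P_N\mathcal M(g)\mathcal C^+-\mathcal P_N\mathcal M(\mathcal P_Mg)\mathcal C^+\|_s\le C_s\|g-\mathcal P_Mg\|_s.$$
   Context: $\mathbb U=\{|z|=1\}$. For $u\in L^2(\mathbb U)$, $u(z)=\sum_ju_jz^j$; $H^s(\mathbb U)$ has norm $\|u\|_s^2=c_{|s|}\sum_j|u_j|^2\max\{1,|j|\}^{2s}$ with fixed constants $c_{|s|}>0$ chosen so that $\|uv\|_s\le\|u\|_s\|v\|_s$ for $s>1/2$; $\|\cdot\|_s$ also denotes the operator norm on $H^s(\mathbb U)$. $\mathcal M(g)u=gu$. $\mathcal C^+u=\sum_{j\ge0}u_jz^j$ (boundary value from inside of the Cauchy integral). For $N\ge1$, $N_-=\lfloor N/2\rfloor$, $N_+=\lfloor(N-1)/2\rfloor$, $\mathcal P_Nu=\sum_{j=-N_-}^{N_+}u_jz^j$, and $\mathcal I_Nu=\sum_{j=-N_-}^{N_+}\check u_jz^j$ is the trigonometric interpolant at the nodes $e^{2\pi i(\ell-1)/N}$, $\ell=1,\dots,N$, i.e. $\check u_j=\sum_{p\in\mathbb Z}u_{pN+j}$. *)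

theory Defs
  imports "HOL-Analysis.Analysis"
begin

text \<open>Functions on the unit circle are represented by their Fourier coefficient
  sequences: u(z) = sum_j u_j z^j corresponds to u :: int => complex.\<close>

type_synonym fcoeff = "int \<Rightarrow> complex"

definition sob_weight :: "real \<Rightarrow> int \<Rightarrow> real" where
  "sob_weight s j = (max 1 (real_of_int \<bar>j\<bar>)) powr (2 * s)"

definition in_Hs :: "real \<Rightarrow> fcoeff \<Rightarrow> bool" where
  "in_Hs s u \<longleftrightarrow> (\<lambda>j. (norm (u j))\<^sup>2 * sob_weight s j) summable_on UNIV"

text \<open>The H^s norm, with the normalising constants c(|s|) given as a parameter c.\<close>
definition Hnorm :: "(real \<Rightarrow> real) \<Rightarrow> real \<Rightarrow> fcoeff \<Rightarrow> real" where
  "Hnorm c s u = sqrt (c \<bar>s\<bar> * (\<Sum>\<^sub>\<infinity>j. (norm (u j))\<^sup>2 * sob_weight s j))"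

text \<open>Multiplication operator M(g): pointwise product of functions, i.e.
  convolution of Fourier coefficients.\<close>
definition mult_op :: "fcoeff \<Rightarrow> fcoeff \<Rightarrow> fcoeff" where
  "mult_op g u = (\<lambda>j. \<Sum>\<^sub>\<infinity>k. g k * u (j - k))"

definition Cplus :: "fcoeff \<Rightarrow> fcoeff" where
  "Cplus u = (\<lambda>j. if 0 \<le> j then u j else 0)"

definition Nminus :: "nat \<Rightarrow> int" where
  "Nminus N = int N div 2"

definition Nplus :: "nat \<Rightarrow> int" where
  "Nplus N = (int N - 1) div 2"

definition PN :: "nat \<Rightarrow> fcoeff \<Rightarrow> fcoeff" where
  "PN N u = (\<lambda>j. if - Nminus N \<le> j \<and> j \<le> Nplus N then u j else 0)"

text \<open>Trigonometric interpolant I_N, with aliased coefficients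
  check-u_j = sum_p u_{pN+j}.\<close>
definition IN :: "nat \<Rightarrow> fcoeff \<Rightarrow> fcoeff" where
  "IN N u = (\<lambda>j. if - Nminus N \<le> j \<and> j \<le> Nplus N
                  then (\<Sum>\<^sub>\<infinity>p::int. u (p * int N + j)) else 0)"

end

theory Submission
  imports Defs
begin

(* Both differences are linear in g: they are I_N M(h) C^+ u and P_N M(h) C^+ u with
   h = g - P_M g.  C^+ and P_N only delete Fourier coefficients, and the algebra property
   gives ||M(h) C^+ u||_s <= ||h||_s ||u||_s, so what remains is that I_N is bounded on H^s
   uniformly in N.  Writing <x> = max 1 |x|, for |j| <= N/2 one has <p> <j> <= 2 <pN + j>;
   Cauchy-Schwarz on the aliased coefficient then gives
     |check-u_j|^2 <j>^(2s) <= 4^s (sum_p <p>^(-2s)) sum_p |u_(pN+j)|^2 <pN+j>^(2s),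
   the constant being finite because s > 1/2, and the residue classes pN + j of the N
   frequencies j are disjoint.

   The algebra hypothesis only bounds norms of products already known to lie in H^s.
   Membership of M(h) w is obtained by truncating both factors with P_K, which makes the
   product finitely supported, and passing to the pointwise limit, under which the H^s norm
   is lower semicontinuous. *)

definition sob_sum :: "real \<Rightarrow> fcoeff \<Rightarrow> real" where
  "sob_sum s u = (\<Sum>\<^sub>\<infinity>j. (norm (u j))\<^sup>2 * sob_weight s j)"

definition freq_band :: "nat \<Rightarrow> int set" where
  "freq_band N = {- Nminus N .. Nplus N}"

lemma sob_weight_pos [simp]: "sob_weight s j > 0"
  unfolding sob_weight_def by simp

lemma sob_weight_nonneg [simp]: "sob_weight s j \<ge> 0"
  using sob_weight_pos[of s j] by linarith

lemma sob_weight_ge_1: "s \<ge> 0 \<Longrightarrow> sob_weight s j \<ge> 1"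
  unfolding sob_weight_def by (intro ge_one_powr_ge_zero) auto

lemma sob_weight_inverse_summable:
  assumes "s > 1/2"
  shows "(\<lambda>j. 1 / sob_weight s j) summable_on UNIV"
proof -
  define f where "f j = 1 / sob_weight s j" for j :: int
  have "summable (\<lambda>n::nat. real n powr (- 2 * s))"
    using assms by (simp add: summable_real_powr_iff)
  moreover have "\<forall>\<^sub>F n in sequentially. f (int n) = real n powr (- 2 * s)"
    using eventually_ge_at_top[of "1::nat"]
    by eventually_elim (simp add: f_def sob_weight_def powr_minus_divide)
  ultimately have "summable (\<lambda>n. f (int n))"
    using summable_cong by fast
  then have pos: "(\<lambda>n. f (int n)) summable_on UNIV" and neg: "(\<lambda>n. f (- int n)) summable_on UNIV"
    by (simp_all add: summable_on_UNIV_nonneg_real_iff f_def sob_weight_def)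
  have "f summable_on range int"
    using pos by (subst summable_on_reindex) (simp_all add: o_def)
  moreover have "f summable_on range (\<lambda>n. - int n)"
    using neg by (subst summable_on_reindex) (simp_all add: o_def inj_on_def)
  ultimately have "f summable_on (range int \<union> range (\<lambda>n. - int n))"
    by (rule summable_on_union)
  moreover have "range int \<union> range (\<lambda>n. - int n) = UNIV"
    by (auto intro: int_cases2[of x for x])
  ultimately show ?thesis
    unfolding f_def by simp
qed

lemma max_one_alias_bound:
  fixes p j :: int
  assumes "N \<ge> 1" "2 * \<bar>j\<bar> \<le> int N"
  shows "max 1 \<bar>p\<bar> * max 1 \<bar>j\<bar> \<le> 2 * max 1 \<bar>p * int N + j\<bar>"
proof (cases "p = 0")
  case True
  then show ?thesis by (simp add: max_def)
next
  case False
  then have "max 1 \<bar>p\<bar> = \<bar>p\<bar>"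
    by simp
  moreover have "\<bar>p\<bar> * max 1 \<bar>j\<bar> \<le> \<bar>p\<bar> * int N"
    using assms by (intro mult_left_mono) auto
  moreover have "int N \<le> \<bar>p\<bar> * int N"
    using False by (simp add: mult_le_cancel_right1; arith)
  moreover have "\<bar>p * int N\<bar> = \<bar>p\<bar> * int N"
    by (simp add: abs_mult)
  then have "\<bar>p\<bar> * int N - \<bar>j\<bar> \<le> max 1 \<bar>p * int N + j\<bar>"
    by linarith
  ultimately show ?thesis
    using assms(2) by simp
qed

lemma sob_weight_alias:
  assumes "s \<ge> 0" "N \<ge> 1" "2 * \<bar>j\<bar> \<le> int N"
  shows "sob_weight s p * sob_weight s j \<le> 2 powr (2 * s) * sob_weight s (p * int N + j)"
proof -
  have "real_of_int (max 1 \<bar>p\<bar> * max 1 \<bar>j\<bar>) \<le> real_of_int (2 * max 1 \<bar>p * int N + j\<bar>)"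
    using max_one_alias_bound[OF assms(2,3), of p] by (simp only: of_int_le_iff)
  then have "max 1 \<bar>real_of_int p\<bar> * max 1 \<bar>real_of_int j\<bar>
               \<le> 2 * max 1 \<bar>real_of_int (p * int N + j)\<bar>"
    by (simp add: of_int_max)
  then have "(max 1 \<bar>real_of_int p\<bar> * max 1 \<bar>real_of_int j\<bar>) powr (2 * s)
               \<le> (2 * max 1 \<bar>real_of_int (p * int N + j)\<bar>) powr (2 * s)"
    using assms(1) by (intro powr_mono2) auto
  then show ?thesis
    unfolding sob_weight_def by (simp add: powr_mult)
qed

lemma has_sum_diff:
  fixes f g :: "'a \<Rightarrow> 'b::topological_ab_group_add"
  assumes "(f has_sum a) A" "(g has_sum b) A"
  shows "((\<lambda>x. f x - g x) has_sum (a - b)) A"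
proof -
  have "((\<lambda>x. - g x) has_sum - b) A"
    using assms(2) by (simp add: has_sum_uminus)
  with assms(1) show ?thesis
    using has_sum_add by fastforce
qed

lemma infsum_diff:
  fixes f g :: "'a \<Rightarrow> 'b::{topological_ab_group_add, t2_space}"
  assumes "f summable_on A" "g summable_on A"
  shows "(\<Sum>\<^sub>\<infinity>x\<in>A. f x - g x) = infsum f A - infsum g A"
  by (intro infsumI has_sum_diff has_sum_infsum assms)

lemma weighted_Cauchy_Schwarz_infsum:
  fixes a W :: "'a \<Rightarrow> real"
  assumes sq: "(\<lambda>x. (a x)\<^sup>2 * W x) summable_on A" and inv: "(\<lambda>x. 1 / W x) summable_on A"
    and a_nonneg: "\<And>x. x \<in> A \<Longrightarrow> a x \<ge> 0" and W_pos: "\<And>x. x \<in> A \<Longrightarrow> W x > 0"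
  shows "a summable_on A"
    "(infsum a A)\<^sup>2 \<le> (\<Sum>\<^sub>\<infinity>x\<in>A. (a x)\<^sup>2 * W x) * (\<Sum>\<^sub>\<infinity>x\<in>A. 1 / W x)"
proof -
  define B where "B = (\<Sum>\<^sub>\<infinity>x\<in>A. (a x)\<^sup>2 * W x) * (\<Sum>\<^sub>\<infinity>x\<in>A. 1 / W x)"
  have W_nonneg: "\<And>x. x \<in> A \<Longrightarrow> W x \<ge> 0"
    using W_pos less_imp_le by blast
  have partial: "sum a F \<le> sqrt B" if F: "finite F" "F \<subseteq> A" for F
  proof -
    have W_F: "\<And>x. x \<in> F \<Longrightarrow> W x > 0"
      using F(2) W_pos by blast
    have "(sum a F)\<^sup>2 = (\<Sum>x\<in>F. (a x * sqrt (W x)) * (1 / sqrt (W x)))\<^sup>2"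
      by (intro arg_cong[where f = "\<lambda>t. t\<^sup>2"] sum.cong) (auto dest!: W_F)
    also have "\<dots> \<le> (\<Sum>x\<in>F. (a x * sqrt (W x))\<^sup>2) * (\<Sum>x\<in>F. (1 / sqrt (W x))\<^sup>2)"
      by (rule Cauchy_Schwarz_ineq_sum)
    also have "\<dots> = (\<Sum>x\<in>F. (a x)\<^sup>2 * W x) * (\<Sum>x\<in>F. 1 / W x)"
      using W_F by (intro arg_cong2[where f = "(*)"] sum.cong)
        (auto simp: power_mult_distrib power_divide less_imp_le)
    also have "\<dots> \<le> B"
      unfolding B_def using F W_nonneg
      by (intro mult_mono finite_sum_le_infsum sum_nonneg infsum_nonneg sq inv) auto
    finally show ?thesis
      by (simp add: real_le_rsqrt)
  qed
  show a: "a summable_on A"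
    by (rule nonneg_bdd_above_summable_on) (use a_nonneg partial in \<open>auto intro!: bdd_aboveI2\<close>)
  have "infsum a A \<le> sqrt B"
    using a by (rule infsum_le_finite_sums) (rule partial)
  moreover have "infsum a A \<ge> 0"
    using a_nonneg by (rule infsum_nonneg)
  moreover have "B \<ge> 0"
    unfolding B_def using W_nonneg by (intro mult_nonneg_nonneg infsum_nonneg) auto
  ultimately show "(infsum a A)\<^sup>2 \<le> (\<Sum>\<^sub>\<infinity>x\<in>A. (a x)\<^sup>2 * W x) * (\<Sum>\<^sub>\<infinity>x\<in>A. 1 / W x)"
    unfolding B_def[symmetric] by (metis power_mono real_sqrt_pow2)
qed

lemma has_sum_tendsto_sum_exhausting:
  assumes "(f has_sum S) UNIV" "\<And>K. finite (A K)" "\<And>x. eventually (\<lambda>K. x \<in> A K) F"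
  shows "((\<lambda>K. sum f (A K)) \<longlongrightarrow> S) F"
proof -
  have "filterlim A (finite_subsets_at_top UNIV) F"
    unfolding filterlim_finite_subsets_at_top
    using assms(2,3) by (simp add: subset_eq eventually_ball_finite_distrib)
  with assms(1) show ?thesis
    unfolding has_sum_def by (rule filterlim_compose)
qed

lemma Hnorm_sob_sum: "Hnorm c s u = sqrt (c \<bar>s\<bar> * sob_sum s u)"
  by (simp add: Hnorm_def sob_sum_def)

lemma sob_sum_nonneg: "sob_sum s u \<ge> 0"
  unfolding sob_sum_def by (intro infsum_nonneg) simp

lemma Hnorm_squared: "c \<bar>s\<bar> \<ge> 0 \<Longrightarrow> (Hnorm c s u)\<^sup>2 = c \<bar>s\<bar> * sob_sum s u"
  by (simp add: Hnorm_sob_sum sob_sum_nonneg)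

lemma Hnorm_nonneg: "c \<bar>s\<bar> \<ge> 0 \<Longrightarrow> Hnorm c s u \<ge> 0"
  by (simp add: Hnorm_sob_sum sob_sum_nonneg)

lemma Hnorm_le_scaled:
  assumes "c \<bar>s\<bar> \<ge> 0" "K \<ge> 0" "sob_sum s v \<le> K * sob_sum s u"
  shows "Hnorm c s v \<le> sqrt K * Hnorm c s u"
proof -
  have "c \<bar>s\<bar> * sob_sum s v \<le> K * (c \<bar>s\<bar> * sob_sum s u)"
    using mult_left_mono[OF assms(3,1)] by (simp add: mult_ac)
  then show ?thesis
    unfolding Hnorm_sob_sum by (simp flip: real_sqrt_mult)
qed

lemma Hnorm_mono:
  "c \<bar>s\<bar> \<ge> 0 \<Longrightarrow> sob_sum s v \<le> sob_sum s u \<Longrightarrow> Hnorm c s v \<le> Hnorm c s u"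
  using Hnorm_le_scaled[of c s 1 v u] by simp

lemma sum_le_sob_sum:
  assumes "in_Hs s u" "finite F"
  shows "(\<Sum>j\<in>F. (norm (u j))\<^sup>2 * sob_weight s j) \<le> sob_sum s u"
  unfolding sob_sum_def using assms unfolding in_Hs_def by (intro finite_sum_le_infsum) auto

lemma norm_le_sqrt_sob_sum:
  assumes "s \<ge> 0" "in_Hs s u"
  shows "norm (u j) \<le> sqrt (sob_sum s u)"
proof -
  have "(norm (u j))\<^sup>2 \<le> (norm (u j))\<^sup>2 * sob_weight s j"
    using sob_weight_ge_1[OF assms(1)] by (simp add: mult_le_cancel_left1)
  also have "\<dots> \<le> sob_sum s u"
    using sum_le_sob_sum[OF assms(2), of "{j}"] by simp
  finally show ?thesis by (simp add: real_le_rsqrt)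
qed

lemma in_Hs_dominated:
  assumes "in_Hs s u" "\<And>j. norm (v j) \<le> norm (u j)"
  shows "in_Hs s v" "sob_sum s v \<le> sob_sum s u"
proof -
  have le: "(norm (v j))\<^sup>2 * sob_weight s j \<le> (norm (u j))\<^sup>2 * sob_weight s j" for j
    using assms(2)[of j] by (intro mult_right_mono power_mono) auto
  show v: "in_Hs s v"
    using assms(1) unfolding in_Hs_def by (rule summable_on_comparison_test) (use le in auto)
  show "sob_sum s v \<le> sob_sum s u"
    using v assms(1) unfolding sob_sum_def in_Hs_def by (rule infsum_mono) (rule le)
qed

lemma in_Hs_finite_support:
  assumes "finite F" "\<And>j. j \<notin> F \<Longrightarrow> v j = 0"
  shows "in_Hs s v" "sob_sum s v = (\<Sum>j\<in>F. (norm (v j))\<^sup>2 * sob_weight s j)"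
proof -
  have "(\<lambda>j. (norm (v j))\<^sup>2 * sob_weight s j) summable_on F"
    using assms(1) by simp
  then show "in_Hs s v"
    unfolding in_Hs_def by (subst summable_on_cong_neutral[where T = F]) (use assms(2) in auto)
  have "sob_sum s v = (\<Sum>\<^sub>\<infinity>j\<in>F. (norm (v j))\<^sup>2 * sob_weight s j)"
    unfolding sob_sum_def by (rule infsum_cong_neutral) (use assms(2) in auto)
  then show "sob_sum s v = (\<Sum>j\<in>F. (norm (v j))\<^sup>2 * sob_weight s j)"
    using assms(1) by simp
qed

lemma in_Hs_pointwise_limit:
  assumes lim: "\<And>j. (\<lambda>K. v K j) \<longlonglongrightarrow> u j"
    and Hs: "\<And>K. in_Hs s (v K)" and bound: "\<And>K. sob_sum s (v K) \<le> B"
  shows "in_Hs s u" "sob_sum s u \<le> B"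
proof -
  have partial: "(\<Sum>j\<in>F. (norm (u j))\<^sup>2 * sob_weight s j) \<le> B" if "finite F" for F
  proof (rule LIMSEQ_le_const2)
    show "(\<lambda>K. \<Sum>j\<in>F. (norm (v K j))\<^sup>2 * sob_weight s j)
            \<longlonglongrightarrow> (\<Sum>j\<in>F. (norm (u j))\<^sup>2 * sob_weight s j)"
      by (intro tendsto_intros lim)
    show "\<exists>N. \<forall>K\<ge>N. (\<Sum>j\<in>F. (norm (v K j))\<^sup>2 * sob_weight s j) \<le> B"
      using order_trans[OF sum_le_sob_sum[OF Hs that] bound] by blast
  qed
  show u: "in_Hs s u"
    unfolding in_Hs_def
    by (rule nonneg_bdd_above_summable_on) (use partial in \<open>auto intro!: bdd_aboveI2\<close>)
  show "sob_sum s u \<le> B"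
    using u unfolding sob_sum_def in_Hs_def by (rule infsum_le_finite_sums) (rule partial)
qed

lemma in_Hs_diff:
  assumes "in_Hs s u" "in_Hs s v"
  shows "in_Hs s (u - v)"
proof -
  have "(\<lambda>j. 2 * ((norm (u j))\<^sup>2 * sob_weight s j) + 2 * ((norm (v j))\<^sup>2 * sob_weight s j))
          summable_on UNIV"
    using assms unfolding in_Hs_def by (intro summable_on_add summable_on_cmult_right)
  then show ?thesis
    unfolding in_Hs_def
  proof (rule summable_on_comparison_test)
    fix j
    have "(norm (u j - v j))\<^sup>2 \<le> (norm (u j) + norm (v j))\<^sup>2"
      by (rule power_mono[OF norm_triangle_ineq4]) simp
    also have "\<dots> \<le> 2 * (norm (u j))\<^sup>2 + 2 * (norm (v j))\<^sup>2"
      using sum_squares_bound[of "norm (u j)" "norm (v j)"] by (simp add: power2_sum)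
    finally have "(norm (u j - v j))\<^sup>2 \<le> 2 * (norm (u j))\<^sup>2 + 2 * (norm (v j))\<^sup>2" .
    from mult_right_mono[OF this sob_weight_nonneg[of s j]]
    show "(norm ((u - v) j))\<^sup>2 * sob_weight s j
               \<le> 2 * ((norm (u j))\<^sup>2 * sob_weight s j) + 2 * ((norm (v j))\<^sup>2 * sob_weight s j)"
      by (simp add: algebra_simps)
  qed simp
qed

lemma in_Hs_norm_summable:
  assumes "s > 1/2" "in_Hs s u"
  shows "(\<lambda>j. norm (u j)) summable_on UNIV"
  using weighted_Cauchy_Schwarz_infsum(1)[of "\<lambda>j. norm (u j)" "sob_weight s"]
    assms sob_weight_inverse_summable unfolding in_Hs_def by auto

lemma PN_freq_band: "PN N u j = (if j \<in> freq_band N then u j else 0)"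
  by (simp add: PN_def freq_band_def)

lemma IN_freq_band:
  "IN N u j = (if j \<in> freq_band N then \<Sum>\<^sub>\<infinity>p. u (p * int N + j) else 0)"
  by (simp add: IN_def freq_band_def)

lemma finite_freq_band [simp]: "finite (freq_band N)"
  by (simp add: freq_band_def)

lemma eventually_in_freq_band: "eventually (\<lambda>N. j \<in> freq_band N) sequentially"
  unfolding eventually_sequentially freq_band_def Nminus_def Nplus_def
  by (rule exI[of _ "nat (2 * \<bar>j\<bar> + 1)"]) auto

lemma abs_le_half_of_freq_band: "j \<in> freq_band N \<Longrightarrow> 2 * \<bar>j\<bar> \<le> int N"
  unfolding freq_band_def Nminus_def Nplus_def by auto

lemma abs_diff_less_of_freq_band:
  "j \<in> freq_band N \<Longrightarrow> j' \<in> freq_band N \<Longrightarrow> \<bar>j - j'\<bar> < int N"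
  unfolding freq_band_def Nminus_def Nplus_def by auto

lemma in_Hs_PN: "in_Hs s u \<Longrightarrow> in_Hs s (PN N u)"
  by (erule in_Hs_dominated(1)) (simp add: PN_freq_band)

lemma sob_sum_PN_le: "in_Hs s u \<Longrightarrow> sob_sum s (PN N u) \<le> sob_sum s u"
  by (erule in_Hs_dominated(2)) (simp add: PN_freq_band)

lemma in_Hs_Cplus: "in_Hs s u \<Longrightarrow> in_Hs s (Cplus u)"
  by (erule in_Hs_dominated(1)) (simp add: Cplus_def)

lemma sob_sum_Cplus_le: "in_Hs s u \<Longrightarrow> sob_sum s (Cplus u) \<le> sob_sum s u"
  by (erule in_Hs_dominated(2)) (simp add: Cplus_def)

lemma convolution_summable:
  assumes "s > 1/2" "in_Hs s h" "in_Hs s w"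
  shows "(\<lambda>k. h k * w (j - k)) summable_on UNIV"
proof (rule abs_summable_summable)
  have "(\<lambda>k. norm (h k) * sqrt (sob_sum s w)) summable_on UNIV"
    using in_Hs_norm_summable[OF assms(1,2)] by (rule summable_on_cmult_left)
  then show "(\<lambda>k. norm (h k * w (j - k))) summable_on UNIV"
    by (rule summable_on_comparison_test)
      (use assms norm_le_sqrt_sob_sum in \<open>auto simp: norm_mult intro!: mult_left_mono\<close>)
qed

lemma mult_op_diff_left:
  assumes "s > 1/2" "in_Hs s g" "in_Hs s g'" "in_Hs s w"
  shows "mult_op g w - mult_op g' w = mult_op (g - g') w"
proof
  fix j
  show "(mult_op g w - mult_op g' w) j = mult_op (g - g') w j"
    using infsum_diff[OF convolution_summable[OF assms(1,2,4)] convolution_summable[OF assms(1,3,4)]]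
    by (simp add: mult_op_def left_diff_distrib)
qed

lemma mult_op_PN_tendsto:
  assumes "s > 1/2" "in_Hs s h" "in_Hs s w"
  shows "(\<lambda>K. mult_op (PN K h) (PN K w) j) \<longlonglongrightarrow> mult_op h w j"
proof -
  define A where "A K = {k \<in> freq_band K. j - k \<in> freq_band K}" for K
  have "mult_op (PN K h) (PN K w) j = (\<Sum>k\<in>A K. h k * w (j - k))" for K
  proof -
    have "mult_op (PN K h) (PN K w) j = (\<Sum>\<^sub>\<infinity>k\<in>A K. h k * w (j - k))"
      unfolding mult_op_def by (rule infsum_cong_neutral) (auto simp: A_def PN_freq_band)
    then show ?thesis
      by (simp add: A_def)
  qed
  moreover have "(\<lambda>K. \<Sum>k\<in>A K. h k * w (j - k)) \<longlonglongrightarrow> mult_op h w j"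
  proof (rule has_sum_tendsto_sum_exhausting)
    show "((\<lambda>k. h k * w (j - k)) has_sum mult_op h w j) UNIV"
      unfolding mult_op_def using convolution_summable[OF assms] by (rule has_sum_infsum)
    show "finite (A K)" for K
      by (simp add: A_def)
    show "eventually (\<lambda>K. k \<in> A K) sequentially" for k
      using eventually_conj[OF eventually_in_freq_band eventually_in_freq_band]
      unfolding A_def by simp
  qed
  ultimately show ?thesis
    by simp
qed

lemma in_Hs_mult_op_finite_support:
  assumes "finite {k. h k \<noteq> 0}" "finite {k. w k \<noteq> 0}"
  shows "in_Hs s (mult_op h w)"
proof (rule in_Hs_finite_support(1))
  show "finite ((\<lambda>(k, l). k + l) ` ({k. h k \<noteq> 0} \<times> {k. w k \<noteq> 0}))"
    using assms by simp
  show "mult_op h w j = 0" if "j \<notin> (\<lambda>(k, l). k + l) ` ({k. h k \<noteq> 0} \<times> {k. w k \<noteq> 0})" for j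
  proof -
    have "(\<lambda>k. h k * w (j - k)) = (\<lambda>k. 0)"
      using that by (force simp: image_iff)
    then show ?thesis
      by (simp add: mult_op_def)
  qed
qed

lemma in_Hs_mult_op:
  assumes alg: "\<And>u v. in_Hs s u \<Longrightarrow> in_Hs s v \<Longrightarrow>
                  Hnorm c s (mult_op u v) \<le> Hnorm c s u * Hnorm c s v"
    and c: "c \<bar>s\<bar> > 0" and s: "s > 1/2" and h: "in_Hs s h" and w: "in_Hs s w"
  shows "in_Hs s (mult_op h w)"
proof (rule in_Hs_pointwise_limit(1))
  show "(\<lambda>K. mult_op (PN K h) (PN K w) j) \<longlonglongrightarrow> mult_op h w j" for j
    using s h w by (rule mult_op_PN_tendsto)
  have PN_support: "finite {k. PN K f k \<noteq> 0}" for K f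
    by (rule finite_subset[of _ "freq_band K"]) (auto simp: PN_freq_band)
  show "in_Hs s (mult_op (PN K h) (PN K w))" for K
    using PN_support[of K h] PN_support[of K w] by (rule in_Hs_mult_op_finite_support)
  show "sob_sum s (mult_op (PN K h) (PN K w)) \<le> (Hnorm c s h * Hnorm c s w)\<^sup>2 / c \<bar>s\<bar>" for K
  proof -
    have "Hnorm c s (mult_op (PN K h) (PN K w)) \<le> Hnorm c s (PN K h) * Hnorm c s (PN K w)"
      by (rule alg[OF in_Hs_PN[OF h] in_Hs_PN[OF w]])
    also have "\<dots> \<le> Hnorm c s h * Hnorm c s w"
      using c h w by (intro mult_mono Hnorm_mono sob_sum_PN_le Hnorm_nonneg) auto
    finally have "(Hnorm c s (mult_op (PN K h) (PN K w)))\<^sup>2 \<le> (Hnorm c s h * Hnorm c s w)\<^sup>2"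
      using c by (intro power_mono Hnorm_nonneg) auto
    then show ?thesis
      using c by (simp add: Hnorm_squared field_simps)
  qed
qed

lemma residue_classes_disjoint:
  assumes "j \<in> freq_band N" "j' \<in> freq_band N" "j \<noteq> j'"
  shows "range (\<lambda>p. p * int N + j) \<inter> range (\<lambda>p. p * int N + j') = {}"
proof (rule ccontr)
  assume "range (\<lambda>p. p * int N + j) \<inter> range (\<lambda>p. p * int N + j') \<noteq> {}"
  then obtain p p' where "p * int N + j = p' * int N + j'"
    by auto
  then have "j - j' = int N * (p' - p)"
    by (simp add: algebra_simps)
  then have "int N dvd j - j'"
    by (rule dvdI)
  then have "int N \<le> \<bar>j - j'\<bar>"
    using dvd_imp_le_int[of "j - j'" "int N"] assms(3) by simp
  with abs_diff_less_of_freq_band[OF assms(1,2)] show False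
    by simp
qed

lemma summable_on_residue_class:
  fixes f :: "int \<Rightarrow> real"
  assumes "f summable_on UNIV" "N \<ge> 1"
  shows "(\<lambda>p. f (p * int N + j)) summable_on UNIV"
proof -
  have "inj (\<lambda>p. p * int N + j)"
    using assms(2) by (auto simp: inj_on_def)
  moreover have "f summable_on range (\<lambda>p. p * int N + j)"
    using assms(1) by (rule summable_on_subset) simp
  ultimately show ?thesis
    by (simp add: summable_on_reindex o_def)
qed

definition aliasing_const :: "real \<Rightarrow> real" where
  "aliasing_const s = 2 powr (2 * s) * (\<Sum>\<^sub>\<infinity>j. 1 / sob_weight s j)"

lemma aliasing_const_nonneg: "aliasing_const s \<ge> 0"
  unfolding aliasing_const_def by (intro mult_nonneg_nonneg infsum_nonneg) auto

lemma IN_coeff_bound: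
  assumes s: "s > 1/2" and N: "N \<ge> 1" and v: "in_Hs s v" and j: "j \<in> freq_band N"
  shows "(norm (IN N v j))\<^sup>2 * sob_weight s j
           \<le> aliasing_const s * (\<Sum>\<^sub>\<infinity>p. (norm (v (p * int N + j)))\<^sup>2 * sob_weight s (p * int N + j))"
proof -
  define a where "a p = norm (v (p * int N + j))" for p
  define W where "W p = sob_weight s (p * int N + j)" for p
  define Z where "Z = (\<Sum>\<^sub>\<infinity>k. 1 / sob_weight s k)"
  have Z_summable: "(\<lambda>k. 1 / sob_weight s k) summable_on UNIV"
    using s by (rule sob_weight_inverse_summable)
  have W_inv_le: "1 / W p \<le> 2 powr (2 * s) / sob_weight s j * (1 / sob_weight s p)" for p
    using sob_weight_alias[of s N j p] s N abs_le_half_of_freq_band[OF j]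
    by (simp add: W_def field_simps)
  have inv: "(\<lambda>p. 1 / W p) summable_on UNIV"
    using summable_on_cmult_right[OF Z_summable, where c = "2 powr (2 * s) / sob_weight s j"]
    by (rule summable_on_comparison_test) (use W_inv_le in \<open>simp_all add: W_def\<close>)
  have "(\<Sum>\<^sub>\<infinity>p. 1 / W p) \<le> (\<Sum>\<^sub>\<infinity>p. 2 powr (2 * s) / sob_weight s j * (1 / sob_weight s p))"
    using inv summable_on_cmult_right[OF Z_summable] W_inv_le by (rule infsum_mono)
  also have "\<dots> = 2 powr (2 * s) / sob_weight s j * Z"
    unfolding Z_def by (rule infsum_cmult_right')
  finally have inv_le: "(\<Sum>\<^sub>\<infinity>p. 1 / W p) \<le> 2 powr (2 * s) / sob_weight s j * Z" .
  have sq: "(\<lambda>p. (a p)\<^sup>2 * W p) summable_on UNIV"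
    using summable_on_residue_class[OF v[unfolded in_Hs_def] N] by (simp add: a_def W_def)
  have CS: "a summable_on UNIV"
    "(\<Sum>\<^sub>\<infinity>p. a p)\<^sup>2 \<le> (\<Sum>\<^sub>\<infinity>p. (a p)\<^sup>2 * W p) * (\<Sum>\<^sub>\<infinity>p. 1 / W p)"
    by (rule weighted_Cauchy_Schwarz_infsum[OF sq inv]; simp add: a_def W_def)+
  have "norm (IN N v j) \<le> (\<Sum>\<^sub>\<infinity>p. a p)"
    using j norm_infsum_bound[OF CS(1)[unfolded a_def]] by (simp add: IN_freq_band a_def)
  then have "(norm (IN N v j))\<^sup>2 \<le> (\<Sum>\<^sub>\<infinity>p. a p)\<^sup>2"
    by (intro power_mono) simp_all
  also have "\<dots> \<le> (\<Sum>\<^sub>\<infinity>p. (a p)\<^sup>2 * W p) * (\<Sum>\<^sub>\<infinity>p. 1 / W p)"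
    by (rule CS(2))
  also have "\<dots> \<le> (\<Sum>\<^sub>\<infinity>p. (a p)\<^sup>2 * W p) * (2 powr (2 * s) / sob_weight s j * Z)"
    using inv_le by (intro mult_left_mono infsum_nonneg) (simp_all add: W_def)
  finally have "(norm (IN N v j))\<^sup>2 * sob_weight s j
      \<le> (\<Sum>\<^sub>\<infinity>p. (a p)\<^sup>2 * W p) * (2 powr (2 * s) / sob_weight s j * Z) * sob_weight s j"
    by (rule mult_right_mono) simp
  then show ?thesis
    using sob_weight_pos[of s j] by (simp add: aliasing_const_def Z_def a_def W_def mult_ac)
qed

lemma sob_sum_IN_le:
  assumes s: "s > 1/2" and N: "N \<ge> 1" and v: "in_Hs s v"
  shows "sob_sum s (IN N v) \<le> aliasing_const s * sob_sum s v"
proof -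
  define f where "f k = (norm (v k))\<^sup>2 * sob_weight s k" for k
  define B where "B j = range (\<lambda>p. p * int N + j)" for j
  have f_summable: "f summable_on UNIV"
    using v unfolding in_Hs_def f_def[abs_def] .
  have class_sum: "(\<Sum>\<^sub>\<infinity>p. f (p * int N + j)) = infsum f (B j)" for j
    unfolding B_def using N by (subst infsum_reindex) (auto simp: inj_on_def o_def)
  have classes: "(f has_sum (\<Sum>j\<in>freq_band N. infsum f (B j))) (\<Union>j\<in>freq_band N. B j)"
  proof (rule sum_has_sum)
    show "(f has_sum infsum f (B j)) (B j)" for j
      by (rule has_sum_infsum, rule summable_on_subset[OF f_summable]) simp
    show "B j \<inter> B j' = {}" if "j \<in> freq_band N" "j' \<in> freq_band N" "j \<noteq> j'" for j j'
      using residue_classes_disjoint[OF that] by (simp add: B_def)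
  qed simp
  have "sob_sum s (IN N v) = (\<Sum>j\<in>freq_band N. (norm (IN N v j))\<^sup>2 * sob_weight s j)"
    by (rule in_Hs_finite_support(2)) (simp_all add: IN_freq_band)
  also have "\<dots> \<le> (\<Sum>j\<in>freq_band N. aliasing_const s * infsum f (B j))"
  proof (rule sum_mono)
    fix j
    assume "j \<in> freq_band N"
    from IN_coeff_bound[OF s N v this]
    show "(norm (IN N v j))\<^sup>2 * sob_weight s j \<le> aliasing_const s * infsum f (B j)"
      unfolding class_sum[symmetric] f_def .
  qed
  also have "\<dots> = aliasing_const s * infsum f (\<Union>j\<in>freq_band N. B j)"
    using classes by (simp add: sum_distrib_left infsumI)
  also have "\<dots> \<le> aliasing_const s * sob_sum s v"
  proof (rule mult_left_mono[OF _ aliasing_const_nonneg])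
    show "infsum f (\<Union>j\<in>freq_band N. B j) \<le> sob_sum s v"
      unfolding sob_sum_def f_def[symmetric]
      by (rule infsum_mono_neutral[OF has_sum_imp_summable[OF classes] f_summable])
        (simp_all add: f_def)
  qed
  finally show ?thesis .
qed

lemma IN_diff:
  assumes "s > 1/2" "N \<ge> 1" "in_Hs s a" "in_Hs s b"
  shows "IN N a - IN N b = IN N (a - b)"
proof
  fix j
  have class_summable: "(\<lambda>p. u (p * int N + j)) summable_on UNIV" if "in_Hs s u" for u
    using summable_on_residue_class[OF in_Hs_norm_summable[OF assms(1) that] assms(2)]
    by (rule abs_summable_summable)
  show "(IN N a - IN N b) j = IN N (a - b) j"
    using infsum_diff[OF class_summable[OF assms(3)] class_summable[OF assms(4)]]
    by (simp add: IN_freq_band)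
qed

lemma Hnorm_mult_op_Cplus_le:
  assumes alg: "\<And>u v. in_Hs s u \<Longrightarrow> in_Hs s v \<Longrightarrow>
                  Hnorm c s (mult_op u v) \<le> Hnorm c s u * Hnorm c s v"
    and c: "c \<bar>s\<bar> \<ge> 0" and h: "in_Hs s h" and u: "in_Hs s u"
  shows "Hnorm c s (mult_op h (Cplus u)) \<le> Hnorm c s h * Hnorm c s u"
proof -
  have "Hnorm c s (mult_op h (Cplus u)) \<le> Hnorm c s h * Hnorm c s (Cplus u)"
    by (rule alg[OF h in_Hs_Cplus[OF u]])
  also have "\<dots> \<le> Hnorm c s h * Hnorm c s u"
    using c sob_sum_Cplus_le[OF u] by (intro mult_left_mono Hnorm_mono Hnorm_nonneg)
  finally show ?thesis .
qed

lemma Hnorm_IN_mult_op_Cplus_diff_le: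
  assumes alg: "\<And>u v. in_Hs s u \<Longrightarrow> in_Hs s v \<Longrightarrow>
                  Hnorm c s (mult_op u v) \<le> Hnorm c s u * Hnorm c s v"
    and c: "c \<bar>s\<bar> > 0" and s: "s > 1/2" and N: "N \<ge> 1"
    and g: "in_Hs s g" and g': "in_Hs s g'" and u: "in_Hs s u"
  shows "Hnorm c s (IN N (mult_op g (Cplus u)) - IN N (mult_op g' (Cplus u)))
           \<le> sqrt (aliasing_const s) * Hnorm c s (g - g') * Hnorm c s u"
proof -
  have w: "in_Hs s (Cplus u)"
    using u by (rule in_Hs_Cplus)
  have prod: "in_Hs s (mult_op f (Cplus u))" if "in_Hs s f" for f
    using alg c s that w by (rule in_Hs_mult_op)
  have "IN N (mult_op g (Cplus u)) - IN N (mult_op g' (Cplus u)) = IN N (mult_op (g - g') (Cplus u))"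
    using IN_diff[OF s N prod[OF g] prod[OF g']] mult_op_diff_left[OF s g g' w] by simp
  then have "Hnorm c s (IN N (mult_op g (Cplus u)) - IN N (mult_op g' (Cplus u)))
      \<le> sqrt (aliasing_const s) * Hnorm c s (mult_op (g - g') (Cplus u))"
    using c sob_sum_IN_le[OF s N prod[OF in_Hs_diff[OF g g']]]
    by (simp add: Hnorm_le_scaled aliasing_const_nonneg less_imp_le)
  also have "\<dots> \<le> sqrt (aliasing_const s) * (Hnorm c s (g - g') * Hnorm c s u)"
    using c aliasing_const_nonneg
    by (intro mult_left_mono Hnorm_mult_op_Cplus_le[OF alg] in_Hs_diff g g' u) auto
  finally show ?thesis
    by (simp add: mult.assoc)
qed

lemma Hnorm_PN_mult_op_Cplus_diff_le:
  assumes alg: "\<And>u v. in_Hs s u \<Longrightarrow> in_Hs s v \<Longrightarrow>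
                  Hnorm c s (mult_op u v) \<le> Hnorm c s u * Hnorm c s v"
    and c: "c \<bar>s\<bar> > 0" and s: "s > 1/2"
    and g: "in_Hs s g" and g': "in_Hs s g'" and u: "in_Hs s u"
  shows "Hnorm c s (PN N (mult_op g (Cplus u)) - PN N (mult_op g' (Cplus u)))
           \<le> Hnorm c s (g - g') * Hnorm c s u"
proof -
  have w: "in_Hs s (Cplus u)"
    using u by (rule in_Hs_Cplus)
  have "PN N (mult_op g (Cplus u)) - PN N (mult_op g' (Cplus u)) = PN N (mult_op (g - g') (Cplus u))"
    using mult_op_diff_left[OF s g g' w, symmetric] by (auto simp: PN_freq_band)
  then have "Hnorm c s (PN N (mult_op g (Cplus u)) - PN N (mult_op g' (Cplus u)))
      \<le> Hnorm c s (mult_op (g - g') (Cplus u))"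
    using c sob_sum_PN_le[OF in_Hs_mult_op[OF alg c s in_Hs_diff[OF g g'] w]]
    by (simp add: Hnorm_mono)
  also have "\<dots> \<le> Hnorm c s (g - g') * Hnorm c s u"
    using c by (intro Hnorm_mult_op_Cplus_le[OF alg] in_Hs_diff g g' u) auto
  finally show ?thesis .
qed

theorem lemmal:
  fixes c :: "real \<Rightarrow> real" and s :: real and g :: fcoeff
  assumes c_pos: "\<forall>t\<ge>0. c t > 0"
    and c_alg: "\<forall>t>1/2. \<forall>u v. in_Hs t u \<longrightarrow> in_Hs t v \<longrightarrow>
                   Hnorm c t (mult_op u v) \<le> Hnorm c t u * Hnorm c t v"
    and s_gt: "s > 1/2"
    and g_Hs: "in_Hs s g"
  shows "\<exists>C>0. \<forall>N M :: nat. N \<ge> 1 \<longrightarrow> M \<ge> 1 \<longrightarrow>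
           (\<forall>u. in_Hs s u \<longrightarrow>
              Hnorm c s (IN N (mult_op g (Cplus u)) - IN N (mult_op (PN M g) (Cplus u)))
                \<le> C * Hnorm c s (g - PN M g) * Hnorm c s u) \<and>
           (\<forall>u. in_Hs s u \<longrightarrow>
              Hnorm c s (PN N (mult_op g (Cplus u)) - PN N (mult_op (PN M g) (Cplus u)))
                \<le> C * Hnorm c s (g - PN M g) * Hnorm c s u)"
proof -
  have c: "c \<bar>s\<bar> > 0"
    using c_pos s_gt by simp
  have alg: "\<And>u v. in_Hs s u \<Longrightarrow> in_Hs s v \<Longrightarrow>
               Hnorm c s (mult_op u v) \<le> Hnorm c s u * Hnorm c s v"
    using c_alg s_gt by blast
  define C where "C = max 1 (sqrt (aliasing_const s))"
  have enlarge: "K * Hnorm c s h * Hnorm c s u \<le> C * Hnorm c s h * Hnorm c s u" if "K \<le> C" for K h u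
    using that c by (intro mult_right_mono Hnorm_nonneg) auto
  have C: "C > 0" "sqrt (aliasing_const s) \<le> C" "1 \<le> C"
    by (simp_all add: C_def less_max_iff_disj)
  moreover have "Hnorm c s (IN N (mult_op g (Cplus u)) - IN N (mult_op (PN M g) (Cplus u)))
                   \<le> C * Hnorm c s (g - PN M g) * Hnorm c s u" if "N \<ge> 1" "in_Hs s u" for N M u
    using Hnorm_IN_mult_op_Cplus_diff_le[OF alg c s_gt that(1) g_Hs in_Hs_PN[OF g_Hs] that(2)]
      enlarge[OF C(2)] by (rule order_trans)
  moreover have "Hnorm c s (PN N (mult_op g (Cplus u)) - PN N (mult_op (PN M g) (Cplus u)))
                   \<le> C * Hnorm c s (g - PN M g) * Hnorm c s u" if "in_Hs s u" for N M u
    using Hnorm_PN_mult_op_Cplus_diff_le[OF alg c s_gt g_Hs in_Hs_PN[OF g_Hs] that]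
      enlarge[OF C(3), simplified] by (rule order_trans)
  ultimately show ?thesis
    by blast
qed

end
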